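(* Let $(X,d,\kappa)$ be a digital metric space with $|X|>1$. Let $S,T:X\to X$ be such that $x\neq y$ implies $d(S(x),S(y))<d(T(x),T(y))$. Then $T$ is one-to-one. If, further, $X$ is finite, then $T$ is a bijection and $S$ is neither one-to-one nor onto.
   Context: A digital metric space is a triple $(X,d,\kappa)$ where $X\subset\mathbb{Z}^n$ for some positive integer $n$, $\kappa$ is an adjacency relation on $X$, and $d$ is a metric on $X$. *)

theory Defs
  imports "HOL-Analysis.Analysis"
begin

text \<open>Points of Z^n are modelled as int ^ 'n for a finite index type 'n
  (n = CARD('n), arbitrary).\<close>

definition metric_on :: "'a set \<Rightarrow> ('a \<Rightarrow> 'a \<Rightarrow> real) \<Rightarrow> bool" where
  "metric_on X d \<longleftrightarrow>
     (\<forall>x\<in>X. \<forall>y\<in>X. 0 \<le> d x y \<and> (d x y = 0 \<longleftrightarrow> x = y) \<and> d x y = d y x) \<and>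
     (\<forall>x\<in>X. \<forall>y\<in>X. \<forall>z\<in>X. d x z \<le> d x y + d y z)"

definition adjacency_on :: "'a set \<Rightarrow> ('a \<Rightarrow> 'a \<Rightarrow> bool) \<Rightarrow> bool" where
  "adjacency_on X \<kappa> \<longleftrightarrow>
     (\<forall>x y. \<kappa> x y \<longrightarrow> x \<in> X \<and> y \<in> X) \<and>
     (\<forall>x y. \<kappa> x y \<longrightarrow> \<kappa> y x) \<and> (\<forall>x. \<not> \<kappa> x x)"

definition digital_metric_space ::
  "(int ^ 'n) set \<Rightarrow> (int ^ 'n \<Rightarrow> int ^ 'n \<Rightarrow> real) \<Rightarrow> (int ^ 'n \<Rightarrow> int ^ 'n \<Rightarrow> bool) \<Rightarrow> bool" where
  "digital_metric_space X d \<kappa> \<longleftrightarrow> metric_on X d \<and> adjacency_on X \<kappa>"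

end

theory Submission
  imports Defs
begin

text \<open>If T identified two distinct points, then d (T x) (T y) = 0 could not strictly exceed
  the nonnegative d (S x) (S y); hence T is injective. On a finite X an injective self-map
  is a permutation, and permuting X does not change the total distance
  \<open>\<Sum>(x,y)\<in>X\<times>X. d x y\<close>. If S were injective too, S and T would both preserve this
  total, while the hypothesis makes the total for S strictly smaller, since |X| > 1 supplies
  a pair of distinct points.\<close>

lemma sum_pairs_bij_betw_eq:
  fixes g :: "'a \<Rightarrow> 'a \<Rightarrow> 'b::comm_monoid_add"
  assumes "bij_betw f X X"
  shows "(\<Sum>(x, y)\<in>X \<times> X. g (f x) (f y)) = (\<Sum>(x, y)\<in>X \<times> X. g x y)"
  using sum.reindex_bij_betw[OF bij_betw_map_prod[OF assms assms], of "case_prod g"]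
  by (simp add: case_prod_beta)

lemma metric_on_dominated_inj_on:
  assumes "metric_on X d" "S ` X \<subseteq> X" "T ` X \<subseteq> X"
    and "\<And>x y. x \<in> X \<Longrightarrow> y \<in> X \<Longrightarrow> x \<noteq> y \<Longrightarrow> d (S x) (S y) < d (T x) (T y)"
  shows "inj_on T X"
proof (rule inj_onI, rule ccontr)
  fix x y assume xy: "x \<in> X" "y \<in> X" "T x = T y" "x \<noteq> y"
  have "d (T x) (T y) = 0" using assms(1,3) xy unfolding metric_on_def by auto
  moreover have "0 \<le> d (S x) (S y)"
    using assms(1,2) xy unfolding metric_on_def by (meson image_subset_iff)
  ultimately show False using assms(4)[OF xy(1,2,4)] by simp
qed

lemma metric_on_dominated_not_inj_on:
  assumes "metric_on X d" "finite X" "card X > 1" "S ` X \<subseteq> X" "T ` X \<subseteq> X"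
    and dom: "\<And>x y. x \<in> X \<Longrightarrow> y \<in> X \<Longrightarrow> x \<noteq> y \<Longrightarrow> d (S x) (S y) < d (T x) (T y)"
  shows "\<not> inj_on S X"
proof
  assume "inj_on S X"
  then have bij_S: "bij_betw S X X"
    using assms(2,4) by (simp add: bij_betw_def endo_inj_surj)
  have bij_T: "bij_betw T X X"
    using metric_on_dominated_inj_on[OF assms(1,4,5) dom] assms(2,5)
    by (simp add: bij_betw_def endo_inj_surj)
  obtain a b where ab: "a \<in> X" "b \<in> X" "a \<noteq> b"
    using assms(3) card_le_Suc0_iff_eq[OF assms(2)] by (metis One_nat_def not_le)
  have diag: "d (S x) (S x) = 0" "d (T x) (T x) = 0" if "x \<in> X" for x
    using assms(1,4,5) that unfolding metric_on_def by auto
  have "(\<Sum>(x, y)\<in>X \<times> X. d (S x) (S y)) < (\<Sum>(x, y)\<in>X \<times> X. d (T x) (T y))"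
  proof (rule sum_strict_mono_ex1)
    show "finite (X \<times> X)" using assms(2) by simp
    show "\<forall>p\<in>X \<times> X. (case p of (x, y) \<Rightarrow> d (S x) (S y)) \<le> (case p of (x, y) \<Rightarrow> d (T x) (T y))"
      using dom diag by (fastforce intro: less_imp_le)
    show "\<exists>p\<in>X \<times> X. (case p of (x, y) \<Rightarrow> d (S x) (S y)) < (case p of (x, y) \<Rightarrow> d (T x) (T y))"
      using dom[OF ab] ab by (intro bexI[of _ "(a, b)"]) auto
  qed
  then show False
    using sum_pairs_bij_betw_eq[OF bij_S, of d] sum_pairs_bij_betw_eq[OF bij_T, of d] by simp
qed

theorem proposition6p3:
  fixes X :: "(int ^ 'n) set"
    and d :: "int ^ 'n \<Rightarrow> int ^ 'n \<Rightarrow> real"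
    and \<kappa> :: "int ^ 'n \<Rightarrow> int ^ 'n \<Rightarrow> bool"
    and S T :: "int ^ 'n \<Rightarrow> int ^ 'n"
  assumes "digital_metric_space X d \<kappa>"
    and "card X > 1 \<or> infinite X"
    and "S ` X \<subseteq> X" and "T ` X \<subseteq> X"
    and "\<And>x y. x \<in> X \<Longrightarrow> y \<in> X \<Longrightarrow> x \<noteq> y \<Longrightarrow> d (S x) (S y) < d (T x) (T y)"
  shows "inj_on T X \<and>
         (finite X \<longrightarrow> bij_betw T X X \<and> \<not> inj_on S X \<and> S ` X \<noteq> X)"
proof -
  have metric: "metric_on X d" using assms(1) by (simp add: digital_metric_space_def)
  have inj_T: "inj_on T X" using metric_on_dominated_inj_on[OF metric assms(3-5)] .
  have "bij_betw T X X \<and> \<not> inj_on S X \<and> S ` X \<noteq> X" if fin: "finite X"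
  proof (intro conjI)
    show "bij_betw T X X" using inj_T fin assms(4) by (simp add: bij_betw_def endo_inj_surj)
    have "card X > 1" using assms(2) fin by blast
    then show "\<not> inj_on S X"
      using metric_on_dominated_not_inj_on[OF metric fin _ assms(3-5)] by blast
    then show "S ` X \<noteq> X" using finite_surj_inj[OF fin] by blast
  qed
  with inj_T show ?thesis by blast
qed

end
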